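(* Let $m,n\ge1$ and $A,B\in\mathbb{R}_+^{m\times n}$. Then: (1) There exists $\mathbf{y}\in\mathbb{R}^n_+\setminus\{\mathbf{0}\}$ with $\hat\rho(A,B)=r(A,B,\mathbf{y})$, i.e. a weakly optimal vector exists. (2) There exists $\mathbf{y}\in\mathbb{R}^n_+\setminus\{\mathbf{0}\}$ with $\rho(A,B)=r(A,B,\mathbf{y})$ for which there is a sequence $\mathbf{y}_k>\mathbf{0}$, $k\in\mathbb{N}$, with $\lim_{k\to\infty}\mathbf{y}_k=\mathbf{y}$ and $\lim_{k\to\infty}r(A,B,\mathbf{y}_k)=\rho(A,B)$, i.e. an optimal vector exists.
   Context: $[m]=\{1,\dots,m\}$. For $A,B\in\mathbb{R}_+^{m\times n}$ (entrywise nonnegative real matrices) and $\mathbf{x}\in\mathbb{R}^n_+\setminus\{\mathbf{0}\}$, set $r(A,B,\mathbf{x})=\max_{i\in[m]}\frac{(A\mathbf{x})_i}{(B\mathbf{x})_i}\in[0,\infty]$ with the conventions $\frac00=0$ and $\frac c0=\infty$ for $c>0$; equivalently $r(A,B,\mathbf{x})=\inf\{t\ge 0: A\mathbf{x}\le tB\mathbf{x}\}$ (with $\inf\emptyset=\infty$). The Collatz–Wielandt quotient is $\rho(A,B)=\inf\{r(A,B,\mathbf{x}):\mathbf{x}>\mathbf{0}\}$ (infimum over vectors with all coordinates positive) and the weak Collatz–Wielandt quotient is $\hat\rho(A,B)=\inf\{r(A,B,\mathbf{x}):\mathbf{x}\in\mathbb{R}^n_+\setminus\{\mathbf{0}\}\}$.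 *)

theory Defs
  imports "HOL-Analysis.Analysis" "HOL-Library.Extended_Real"
begin

text \<open>Quotient in [0,\<infinity>] with conventions 0/0 = 0 and c/0 = \<infinity> for c > 0
  (arguments are nonnegative in all uses).\<close>
definition cw_quot :: "real \<Rightarrow> real \<Rightarrow> ereal" where
  "cw_quot a b = (if a = 0 then 0 else if b = 0 then \<infinity> else ereal (a / b))"

definition nonneg_mat :: "real ^ 'n ^ 'm \<Rightarrow> bool" where
  "nonneg_mat A \<longleftrightarrow> (\<forall>i j. 0 \<le> A $ i $ j)"

definition nonneg_vec :: "real ^ 'n \<Rightarrow> bool" where
  "nonneg_vec x \<longleftrightarrow> (\<forall>j. 0 \<le> x $ j)"

definition pos_vec :: "real ^ 'n \<Rightarrow> bool" where
  "pos_vec x \<longleftrightarrow> (\<forall>j. 0 < x $ j)"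

definition cw_r :: "real ^ 'n ^ 'm::finite \<Rightarrow> real ^ 'n ^ 'm \<Rightarrow> real ^ 'n \<Rightarrow> ereal" where
  "cw_r A B x = Max (range (\<lambda>i. cw_quot ((A *v x) $ i) ((B *v x) $ i)))"

definition cw_rho :: "real ^ 'n ^ 'm::finite \<Rightarrow> real ^ 'n ^ 'm \<Rightarrow> ereal" where
  "cw_rho A B = Inf {cw_r A B x | x. pos_vec x}"

definition cw_rho_hat :: "real ^ 'n ^ 'm::finite \<Rightarrow> real ^ 'n ^ 'm \<Rightarrow> ereal" where
  "cw_rho_hat A B = Inf {cw_r A B x | x. nonneg_vec x \<and> x \<noteq> 0}"

end

theory Submission
  imports Defs
begin

(*
  For part (1), normalise nonnegative vectors x_k whose quotients r(A,B,x_k) decrease to the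
  weak quotient onto the simplex and pass to a convergent subsequence: the homogeneous
  inequalities A x_k <= t_k B x_k survive in the limit, and r(A,B,v) <= t is equivalent to
  A v <= t B v.

  For part (2), the same limit argument applied to positive near-optimal vectors yields a
  nonnegative w ~= 0 with A w <= rho B w; take one of maximal support. If r(A,B,w) < rho, then
  w has a zero coordinate, and every row either satisfies (A w)_i < rho (B w)_i strictly or has
  (A w)_i = (B w)_i = 0. Restricting the positive near-optimal vectors to the zero set of w and
  passing to the limit gives v ~= 0, supported off supp w, that satisfies the inequalities in
  the degenerate rows; then w + e v for small e > 0 has larger support, a contradiction.
  So r(A,B,w) = rho, and adding vanishing multiples of positive near-optimal vectors to w gives
  the required positive approximations.
*)

lemma matrix_vector_mult_nth: "(A *v x) $ i = (\<Sum>j\<in>UNIV. A $ i $ j * x $ j)"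
  by (simp add: matrix_vector_mult_def)

lemma nonneg_mat_vector_mult_nonneg: "nonneg_mat A \<Longrightarrow> nonneg_vec x \<Longrightarrow> 0 \<le> (A *v x) $ i"
  unfolding matrix_vector_mult_nth nonneg_mat_def nonneg_vec_def by (intro sum_nonneg) auto

lemma pos_vec_imp_nonneg_vec: "pos_vec x \<Longrightarrow> nonneg_vec x"
  by (auto simp: pos_vec_def nonneg_vec_def less_imp_le)

lemma pos_vec_nonzero: "pos_vec x \<Longrightarrow> x \<noteq> 0"
  by (auto simp: pos_vec_def)

lemma pos_vec_one: "pos_vec (\<chi> j. 1)"
  by (simp add: pos_vec_def)

lemma nonneg_vec_sum_pos:
  assumes "nonneg_vec x" "x \<noteq> 0"
  shows "0 < (\<Sum>j\<in>UNIV. x $ j)"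
proof -
  obtain j where "x $ j \<noteq> 0"
    using assms(2) by (metis vec_eq_iff zero_index)
  with assms(1) have "0 < x $ j"
    by (auto simp: nonneg_vec_def less_le)
  also have "x $ j \<le> (\<Sum>j\<in>UNIV. x $ j)"
    by (rule member_le_sum) (use assms(1) in \<open>auto simp: nonneg_vec_def\<close>)
  finally show ?thesis .
qed

lemma cw_quot_nonneg: "0 \<le> a \<Longrightarrow> 0 \<le> b \<Longrightarrow> 0 \<le> cw_quot a b"
  unfolding cw_quot_def by auto

lemma cw_quot_le_iff: "0 \<le> a \<Longrightarrow> 0 \<le> b \<Longrightarrow> 0 \<le> t \<Longrightarrow> cw_quot a b \<le> ereal t \<longleftrightarrow> a \<le> t * b"
  unfolding cw_quot_def by (auto simp: pos_divide_le_eq mult.commute)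

lemma cw_quot_less_imp_less:
  "0 \<le> a \<Longrightarrow> 0 \<le> b \<Longrightarrow> a \<noteq> 0 \<or> b \<noteq> 0 \<Longrightarrow> cw_quot a b < ereal p \<Longrightarrow> a < p * b"
  unfolding cw_quot_def by (auto simp: divide_less_eq mult.commute split: if_splits)

lemma cw_quot_le_cw_r: "cw_quot ((A *v x) $ i) ((B *v x) $ i) \<le> cw_r A B x"
  unfolding cw_r_def by (rule Max_ge) auto

lemma cw_r_le_iff:
  assumes "nonneg_mat A" "nonneg_mat B" "nonneg_vec x" "0 \<le> t"
  shows "cw_r A B x \<le> ereal t \<longleftrightarrow> (\<forall>i. (A *v x) $ i \<le> t * (B *v x) $ i)"
proof -
  have "cw_r A B x \<le> ereal t \<longleftrightarrow> (\<forall>i. cw_quot ((A *v x) $ i) ((B *v x) $ i) \<le> ereal t)"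
    unfolding cw_r_def by (subst Max_le_iff) auto
  also have "\<dots> \<longleftrightarrow> (\<forall>i. (A *v x) $ i \<le> t * (B *v x) $ i)"
    using assms by (simp add: cw_quot_le_iff nonneg_mat_vector_mult_nonneg)
  finally show ?thesis .
qed

lemma cw_r_nonneg:
  assumes "nonneg_mat A" "nonneg_mat B" "nonneg_vec x"
  shows "0 \<le> cw_r A B x"
  using assms cw_quot_le_cw_r[of A x _ B]
  by (meson cw_quot_nonneg nonneg_mat_vector_mult_nonneg order_trans)

lemma cw_r_less_imp_less:
  assumes "nonneg_mat A" "nonneg_mat B" "nonneg_vec x" "cw_r A B x < ereal p"
    and "(A *v x) $ i \<noteq> 0 \<or> (B *v x) $ i \<noteq> 0"
  shows "(A *v x) $ i < p * (B *v x) $ i"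
  using assms cw_quot_le_cw_r[of A x i B]
  by (intro cw_quot_less_imp_less) (auto simp: nonneg_mat_vector_mult_nonneg)

lemma LIMSEQ_add_inverse_Suc: "(\<lambda>k. p + inverse (real (Suc k))) \<longlonglongrightarrow> (p :: real)"
  using tendsto_add[OF tendsto_const LIMSEQ_inverse_real_of_nat, of p] by simp

lemma Inf_cw_r_approx:
  fixes A B :: "real ^ 'n::finite ^ 'm::finite"
  assumes AB: "nonneg_mat A" "nonneg_mat B" and Q: "\<And>x. Q x \<Longrightarrow> nonneg_vec x"
    and Inf: "Inf {cw_r A B x | x. Q x} = ereal p" and p: "0 \<le> p"
  obtains x where "\<And>k. Q (x k)"
    "\<And>k i. (A *v x k) $ i \<le> (p + inverse (real (Suc k))) * (B *v x k) $ i"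
proof -
  have "\<exists>x. Q x \<and> cw_r A B x \<le> ereal (p + inverse (real (Suc k)))" for k
  proof -
    have "Inf {cw_r A B x | x. Q x} < ereal (p + inverse (real (Suc k)))"
      using Inf by simp
    then show ?thesis
      unfolding Inf_less_iff by (auto dest: less_imp_le)
  qed
  then obtain x where x: "\<And>k. Q (x k)" "\<And>k. cw_r A B (x k) \<le> ereal (p + inverse (real (Suc k)))"
    by metis
  have "0 \<le> p + inverse (real (Suc k))" for k
    using p by (simp add: add_nonneg_nonneg)
  with x show ?thesis
    using that cw_r_le_iff[OF AB Q[OF x(1)]] by blast
qed

lemma nonneg_vec_seq_normalized_convergent:
  fixes x :: "nat \<Rightarrow> real ^ 'n::finite"
  assumes "\<And>k. nonneg_vec (x k)" "\<And>k. x k \<noteq> 0"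
  obtains r l where "strict_mono r" "nonneg_vec l" "l \<noteq> 0"
    "(\<lambda>k. x (r k) /\<^sub>R (\<Sum>j\<in>UNIV. x (r k) $ j)) \<longlonglongrightarrow> l"
proof -
  define z where "z k = x k /\<^sub>R (\<Sum>j\<in>UNIV. x k $ j)" for k
  have z_nonneg: "0 \<le> z k $ j" for k j
    using assms(1)[of k] nonneg_vec_sum_pos[OF assms(1,2), of k]
    by (simp add: z_def nonneg_vec_def)
  have z_sum: "(\<Sum>j\<in>UNIV. z k $ j) = 1" for k
    using nonneg_vec_sum_pos[OF assms(1,2), of k]
    by (simp add: z_def flip: sum_distrib_left)
  have "norm (z k) \<le> 1" for k
    using norm_le_l1_cart[of "z k"] z_nonneg z_sum by simp
  then have "bounded (range z)"
    by (auto simp: bounded_iff)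
  then obtain r l where r: "strict_mono r" and lim: "(z \<circ> r) \<longlonglongrightarrow> l"
    using bounded_imp_convergent_subsequence by blast
  have lim_nth: "(\<lambda>k. z (r k) $ j) \<longlonglongrightarrow> l $ j" for j
    using tendsto_vec_nth[OF lim] by (simp add: o_def)
  have "nonneg_vec l"
    unfolding nonneg_vec_def by (metis LIMSEQ_le_const lim_nth z_nonneg)
  moreover have "(\<Sum>j\<in>UNIV. l $ j) = 1"
    using tendsto_sum[of UNIV "\<lambda>j k. z (r k) $ j", OF lim_nth] z_sum
    by (simp add: LIMSEQ_const_iff)
  then have "l \<noteq> 0"
    by auto
  ultimately show ?thesis
    using that r lim by (simp add: z_def o_def)
qed

lemma nonneg_subsolution_limit:
  fixes A B :: "real ^ 'n::finite ^ 'm::finite" and x :: "nat \<Rightarrow> real ^ 'n"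
  assumes x: "\<And>k. nonneg_vec (x k)" "\<And>k. x k \<noteq> 0"
    and le: "\<And>k i. i \<in> I \<Longrightarrow> (A *v x k) $ i \<le> t k * (B *v x k) $ i"
    and t: "t \<longlonglongrightarrow> t_lim"
    and zero: "\<And>k j. j \<in> J \<Longrightarrow> x k $ j = 0"
  obtains v where "nonneg_vec v" "v \<noteq> 0"
    "\<And>i. i \<in> I \<Longrightarrow> (A *v v) $ i \<le> t_lim * (B *v v) $ i" "\<And>j. j \<in> J \<Longrightarrow> v $ j = 0"
proof -
  obtain r l where r: "strict_mono r" and l: "nonneg_vec l" "l \<noteq> 0"
    and lim: "(\<lambda>k. x (r k) /\<^sub>R (\<Sum>j\<in>UNIV. x (r k) $ j)) \<longlonglongrightarrow> l"
    using nonneg_vec_seq_normalized_convergent[OF x] .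
  define s where "s k = inverse (\<Sum>j\<in>UNIV. x (r k) $ j)" for k
  have s_pos: "0 < s k" for k
    using nonneg_vec_sum_pos[OF x] by (simp add: s_def)
  have lim': "(\<lambda>k. s k *\<^sub>R x (r k)) \<longlonglongrightarrow> l"
    using lim by (simp add: s_def)
  have "(A *v l) $ i \<le> t_lim * (B *v l) $ i" if "i \<in> I" for i
  proof -
    have "(\<lambda>k. t (r k) * (B *v (s k *\<^sub>R x (r k))) $ i - (A *v (s k *\<^sub>R x (r k))) $ i)
        \<longlonglongrightarrow> t_lim * (B *v l) $ i - (A *v l) $ i"
      using LIMSEQ_subseq_LIMSEQ[OF t r] lim'
      by (intro tendsto_intros bounded_linear.tendsto[OF matrix_vector_mul_bounded_linear])
        (simp_all add: o_def)
    moreover have "0 \<le> t (r k) * (B *v (s k *\<^sub>R x (r k))) $ i - (A *v (s k *\<^sub>R x (r k))) $ i" for k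
      using le[OF that, of "r k"] s_pos[of k]
      by (simp add: matrix_vector_mult_scaleR mult.left_commute flip: right_diff_distrib)
    ultimately show ?thesis
      using LIMSEQ_le_const by fastforce
  qed
  moreover have "l $ j = 0" if "j \<in> J" for j
    using LIMSEQ_unique[OF tendsto_vec_nth[OF lim', of j]] zero[OF that] by simp
  ultimately show ?thesis
    using that l by blast
qed

lemma cw_rho_hat_nonneg: "nonneg_mat A \<Longrightarrow> nonneg_mat B \<Longrightarrow> 0 \<le> cw_rho_hat A B"
  unfolding cw_rho_hat_def by (rule Inf_greatest) (auto intro: cw_r_nonneg)

lemma cw_rho_hat_le_cw_r: "nonneg_vec x \<Longrightarrow> x \<noteq> 0 \<Longrightarrow> cw_rho_hat A B \<le> cw_r A B x"
  unfolding cw_rho_hat_def by (rule Inf_lower) auto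

lemma cw_rho_nonneg: "nonneg_mat A \<Longrightarrow> nonneg_mat B \<Longrightarrow> 0 \<le> cw_rho A B"
  unfolding cw_rho_def by (rule Inf_greatest) (auto intro: cw_r_nonneg pos_vec_imp_nonneg_vec)

lemma cw_rho_le_cw_r: "pos_vec x \<Longrightarrow> cw_rho A B \<le> cw_r A B x"
  unfolding cw_rho_def by (rule Inf_lower) auto

lemma cw_rho_hat_attained:
  fixes A B :: "real ^ 'n::finite ^ 'm::finite"
  assumes AB: "nonneg_mat A" "nonneg_mat B"
  obtains y where "nonneg_vec y" "y \<noteq> 0" "cw_rho_hat A B = cw_r A B y"
proof (cases "cw_rho_hat A B")
  case PInf
  have one: "nonneg_vec (\<chi> j. 1)" "(\<chi> j. 1) \<noteq> (0 :: real ^ 'n)"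
    using pos_vec_one pos_vec_imp_nonneg_vec pos_vec_nonzero by blast+
  then have "cw_rho_hat A B \<le> cw_r A B (\<chi> j. 1)"
    by (rule cw_rho_hat_le_cw_r)
  then show ?thesis
    using PInf that[OF one] by simp
next
  case (real p)
  have p: "0 \<le> p"
    using cw_rho_hat_nonneg[OF AB] real by simp
  obtain x where x: "\<And>k. nonneg_vec (x k) \<and> x k \<noteq> 0"
    and le: "\<And>k i. (A *v x k) $ i \<le> (p + inverse (real (Suc k))) * (B *v x k) $ i"
    using Inf_cw_r_approx[OF AB _ real[unfolded cw_rho_hat_def] p] by blast
  obtain v where v: "nonneg_vec v" "v \<noteq> 0" "\<And>i. (A *v v) $ i \<le> p * (B *v v) $ i"
    by (rule nonneg_subsolution_limit[OF _ _ le LIMSEQ_add_inverse_Suc, where I = UNIV and J = "{}"])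
      (use x in auto)
  have "cw_r A B v \<le> cw_rho_hat A B"
    using cw_r_le_iff[OF AB v(1) p] v(3) real by simp
  then show ?thesis
    using that[OF v(1,2)] cw_rho_hat_le_cw_r[OF v(1,2), of A B] by simp
qed (use cw_rho_hat_nonneg[OF AB] in simp)

definition vec_support :: "'a::zero ^ 'n \<Rightarrow> 'n set" where
  "vec_support x = {j. x $ j \<noteq> 0}"

lemma vec_support_add_scaleR_psubset:
  fixes v w :: "real ^ 'n"
  assumes "v \<noteq> 0" "e \<noteq> 0" "\<And>j. j \<in> vec_support w \<Longrightarrow> v $ j = 0"
  shows "vec_support w \<subset> vec_support (w + e *\<^sub>R v)"
proof -
  obtain j where j: "v $ j \<noteq> 0"
    using assms(1) by (metis vec_eq_iff zero_index)
  moreover have "w $ j = 0"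
    using assms(3) j unfolding vec_support_def by blast
  ultimately have "j \<in> vec_support (w + e *\<^sub>R v) - vec_support w"
    using assms(2) by (simp add: vec_support_def)
  moreover have "vec_support w \<subseteq> vec_support (w + e *\<^sub>R v)"
    using assms(3) by (auto simp: vec_support_def)
  ultimately show ?thesis
    by blast
qed

lemma nonneg_mat_vector_mult_restrict:
  assumes "nonneg_mat A" "nonneg_vec w" "(A *v w) $ i = 0"
  shows "(A *v (\<chi> j. if w $ j = 0 then y $ j else 0)) $ i = (A *v y) $ i"
proof -
  have "A $ i $ j * w $ j = 0" for j
    using assms unfolding matrix_vector_mult_nth nonneg_mat_def nonneg_vec_def
    by (subst (asm) sum_nonneg_eq_0_iff) auto
  then show ?thesis
    unfolding matrix_vector_mult_nth by (intro sum.cong) auto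
qed

lemma subsolution_perturbation:
  fixes A B :: "real ^ 'n ^ 'm::finite"
  assumes "nonneg_mat B" "nonneg_vec v" "0 \<le> p"
    and I: "\<And>i. i \<in> I \<Longrightarrow> (A *v w) $ i \<le> p * (B *v w) $ i \<and> (A *v v) $ i \<le> p * (B *v v) $ i"
    and not_I: "\<And>i. i \<notin> I \<Longrightarrow> (A *v w) $ i < p * (B *v w) $ i"
  obtains e where "0 < e" "\<And>i. (A *v (w + e *\<^sub>R v)) $ i \<le> p * (B *v (w + e *\<^sub>R v)) $ i"
proof -
  have "\<forall>\<^sub>F e in at_right 0. (A *v w) $ i + e * (A *v v) $ i \<le> p * (B *v w) $ i + e * (p * (B *v v) $ i)"
    for i
  proof (cases "i \<in> I")
    case True
    then have "(A *v w) $ i + e * (A *v v) $ i \<le> p * (B *v w) $ i + e * (p * (B *v v) $ i)"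
      if "0 < e" for e
      using I[OF True] that by (intro add_mono mult_left_mono) auto
    then show ?thesis
      using eventually_at_right_less[of 0] by (auto elim: eventually_mono)
  next
    case False
    have nonneg: "0 \<le> p * (B *v v) $ i"
      using assms(1-3) by (simp add: nonneg_mat_vector_mult_nonneg)
    have "((\<lambda>e. (A *v w) $ i + e * (A *v v) $ i) \<longlongrightarrow> (A *v w) $ i) (at_right 0)"
      by (auto intro!: tendsto_eq_intros)
    then have "\<forall>\<^sub>F e in at_right 0. (A *v w) $ i + e * (A *v v) $ i < p * (B *v w) $ i"
      using not_I[OF False] by (rule order_tendstoD)
    then show ?thesis
      using eventually_at_right_less[of 0]
    proof eventually_elim
      case (elim e)
      moreover have "0 \<le> e * (p * (B *v v) $ i)"
        using elim nonneg by simp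
      ultimately show ?case
        by linarith
    qed
  qed
  then have "\<forall>\<^sub>F e in at_right 0. 0 < e \<and> (\<forall>i. (A *v w) $ i + e * (A *v v) $ i \<le> p * (B *v w) $ i + e * (p * (B *v v) $ i))"
    by (intro eventually_conj eventually_at_right_less eventually_all_finite)
  then obtain e where "0 < e" "\<And>i. (A *v w) $ i + e * (A *v v) $ i \<le> p * (B *v w) $ i + e * (p * (B *v v) $ i)"
    using eventually_happens'[OF trivial_limit_at_right_real] by blast
  then show ?thesis
    using that by (simp add: matrix_vector_right_distrib matrix_vector_mult_scaleR algebra_simps)
qed

lemma subsolution_support_extension:
  fixes A B :: "real ^ 'n::finite ^ 'm::finite"
  assumes AB: "nonneg_mat A" "nonneg_mat B"
    and w: "nonneg_vec w" "\<not> pos_vec w" "cw_r A B w < ereal p"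
    and y: "\<And>k. pos_vec (y k)" "\<And>k i. (A *v y k) $ i \<le> t k * (B *v y k) $ i"
    and t: "t \<longlonglongrightarrow> p"
  obtains w' where "nonneg_vec w'" "\<And>i. (A *v w') $ i \<le> p * (B *v w') $ i"
    "vec_support w \<subset> vec_support w'"
proof -
  have p: "0 \<le> p"
    using order.strict_trans1[OF cw_r_nonneg[OF AB w(1)] w(3)] by simp
  have w_le: "(A *v w) $ i \<le> p * (B *v w) $ i" for i
    using cw_r_le_iff[OF AB w(1) p] less_imp_le[OF w(3)] by simp
  define I where "I = {i. (A *v w) $ i = 0 \<and> (B *v w) $ i = 0}"
  have w_less: "(A *v w) $ i < p * (B *v w) $ i" if "i \<notin> I" for i
    using cw_r_less_imp_less[OF AB w(1,3)] that by (simp add: I_def)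
  obtain j0 where j0: "w $ j0 = 0"
    using w(1,2) by (auto simp: pos_vec_def nonneg_vec_def less_le)
  define x where "x k = (\<chi> j. if w $ j = 0 then y k $ j else 0)" for k
  have x_nonneg: "nonneg_vec (x k)" for k
    using y(1)[of k] by (auto simp: x_def pos_vec_def nonneg_vec_def less_imp_le)
  have x_nonzero: "x k \<noteq> 0" for k
  proof -
    have "x k $ j0 = y k $ j0"
      using j0 by (simp add: x_def)
    then show ?thesis
      using y(1)[of k] unfolding pos_vec_def by (metis less_irrefl zero_index)
  qed
  \<comment> \<open>rows in I do not see the coordinates in the support of w\<close>
  have x_le: "(A *v x k) $ i \<le> t k * (B *v x k) $ i" if "i \<in> I" for k i
    using y(2)[of k i] that nonneg_mat_vector_mult_restrict[OF AB(1) w(1), of i "y k"]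
      nonneg_mat_vector_mult_restrict[OF AB(2) w(1), of i "y k"]
    by (simp add: I_def x_def)
  have x_zero: "x k $ j = 0" if "j \<in> vec_support w" for k j
    using that by (simp add: x_def vec_support_def)
  obtain v where v: "nonneg_vec v" "v \<noteq> 0" "\<And>i. i \<in> I \<Longrightarrow> (A *v v) $ i \<le> p * (B *v v) $ i"
    "\<And>j. j \<in> vec_support w \<Longrightarrow> v $ j = 0"
    by (rule nonneg_subsolution_limit[OF x_nonneg x_nonzero x_le t x_zero]) blast+
  obtain e where e: "0 < e" "\<And>i. (A *v (w + e *\<^sub>R v)) $ i \<le> p * (B *v (w + e *\<^sub>R v)) $ i"
    using subsolution_perturbation[OF AB(2) v(1) p, of I A w] w_le v(3) w_less by blast
  show ?thesis
  proof (rule that)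
    show "nonneg_vec (w + e *\<^sub>R v)"
      using w(1) v(1) e(1) by (simp add: nonneg_vec_def)
    show "vec_support w \<subset> vec_support (w + e *\<^sub>R v)"
      using v(2,4) e(1) by (intro vec_support_add_scaleR_psubset) auto
  qed (rule e(2))
qed

lemma cw_rho_attained:
  fixes A B :: "real ^ 'n::finite ^ 'm::finite"
  assumes AB: "nonneg_mat A" "nonneg_mat B" and rho: "cw_rho A B = ereal p"
    and y: "\<And>k. pos_vec (y k)" "\<And>k i. (A *v y k) $ i \<le> t k * (B *v y k) $ i"
    and t: "t \<longlonglongrightarrow> p"
  obtains w where "nonneg_vec w" "w \<noteq> 0" "cw_r A B w = ereal p"
proof -
  define P where "P w \<longleftrightarrow> nonneg_vec w \<and> w \<noteq> 0 \<and> (\<forall>i. (A *v w) $ i \<le> p * (B *v w) $ i)"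
    for w :: "real ^ 'n"
  have p: "0 \<le> p"
    using cw_rho_nonneg[OF AB] rho by simp
  obtain w0 where "P w0"
    by (rule nonneg_subsolution_limit[OF pos_vec_imp_nonneg_vec[OF y(1)] pos_vec_nonzero[OF y(1)],
          where I = UNIV and t = t and t_lim = p and J = "{}"])
      (use y(2) t in \<open>auto simp: P_def\<close>)
  moreover have "card (vec_support w) < Suc CARD('n)" for w :: "real ^ 'n"
    by (simp add: card_mono le_imp_less_Suc)
  ultimately obtain w where "P w" and w_max: "\<And>w'. P w' \<Longrightarrow> card (vec_support w') \<le> card (vec_support w)"
    using ex_has_greatest_nat[of P w0 "\<lambda>w. card (vec_support w)"] by blast
  then have w: "nonneg_vec w" "w \<noteq> 0" "cw_r A B w \<le> ereal p"
    using cw_r_le_iff[OF AB _ p] by (auto simp: P_def)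
  have "\<not> cw_r A B w < ereal p"
  proof
    assume less: "cw_r A B w < ereal p"
    then have "\<not> pos_vec w"
      using cw_rho_le_cw_r[of w A B] rho by auto
    then obtain w' where w': "nonneg_vec w'" "\<And>i. (A *v w') $ i \<le> p * (B *v w') $ i"
      "vec_support w \<subset> vec_support w'"
      using subsolution_support_extension[OF AB w(1) _ less y t] by blast
    then have "P w'"
      by (auto simp: P_def vec_support_def)
    have "card (vec_support w) < card (vec_support w')"
      using w'(3) by (simp add: psubset_card_mono)
    with w_max[OF \<open>P w'\<close>] show False
      by simp
  qed
  with w show ?thesis
    using that by simp
qed

lemma positive_approximation:
  fixes A B :: "real ^ 'n::finite ^ 'm::finite"
  assumes AB: "nonneg_mat A" "nonneg_mat B"
    and w: "nonneg_vec w" "\<And>i. (A *v w) $ i \<le> p * (B *v w) $ i"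
    and y: "\<And>k. pos_vec (y k)" "\<And>k i. (A *v y k) $ i \<le> t k * (B *v y k) $ i"
    and t: "\<And>k. p \<le> t k" "0 \<le> p"
  obtains ys where "\<And>k. pos_vec (ys k)" "ys \<longlonglongrightarrow> w" "\<And>k. cw_r A B (ys k) \<le> ereal (t k)"
proof -
  define c where "c k = inverse (real (Suc k) * norm (y k))" for k
  define ys where "ys k = w + c k *\<^sub>R y k" for k
  have c_pos: "0 < c k" for k
    using pos_vec_nonzero[OF y(1)] by (simp add: c_def)
  have norm_eq: "norm (c k *\<^sub>R y k) = inverse (real (Suc k))" for k
  proof -
    have "norm (y k) \<noteq> 0"
      using pos_vec_nonzero[OF y(1)] by simp
    then show ?thesis
      using c_pos[of k] by (simp add: c_def)
  qed
  have small: "(\<lambda>k. c k *\<^sub>R y k) \<longlonglongrightarrow> 0"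
    by (rule tendsto_norm_zero_cancel) (simp only: norm_eq LIMSEQ_inverse_real_of_nat)
  have "ys \<longlonglongrightarrow> w"
    unfolding ys_def using tendsto_add[OF tendsto_const[of w] small] by simp
  moreover have ys_pos: "pos_vec (ys k)" for k
    using w(1) y(1)[of k] c_pos[of k]
    by (simp add: ys_def pos_vec_def nonneg_vec_def add_nonneg_pos)
  moreover have "cw_r A B (ys k) \<le> ereal (t k)" for k
  proof -
    have "(A *v ys k) $ i \<le> t k * (B *v ys k) $ i" for i
    proof -
      have "(A *v w) $ i \<le> t k * (B *v w) $ i"
        using w(2)[of i] mult_right_mono[OF t(1) nonneg_mat_vector_mult_nonneg[OF AB(2) w(1)]]
        by (rule order_trans)
      moreover have "c k * (A *v y k) $ i \<le> c k * (t k * (B *v y k) $ i)"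
        using y(2) c_pos[of k] by (simp add: mult_left_mono)
      ultimately show ?thesis
        by (simp add: ys_def matrix_vector_right_distrib matrix_vector_mult_scaleR algebra_simps)
    qed
    then show ?thesis
      using cw_r_le_iff[OF AB pos_vec_imp_nonneg_vec[OF ys_pos] order_trans[OF t(2,1)]] by simp
  qed
  ultimately show ?thesis
    using that by blast
qed

lemma cw_rho_optimal_vector:
  fixes A B :: "real ^ 'n::finite ^ 'm::finite"
  assumes AB: "nonneg_mat A" "nonneg_mat B"
  obtains y ys where "nonneg_vec y" "y \<noteq> 0" "cw_rho A B = cw_r A B y"
    "\<And>k. pos_vec (ys k)" "ys \<longlonglongrightarrow> y" "(\<lambda>k. cw_r A B (ys k)) \<longlonglongrightarrow> cw_rho A B"
proof (cases "cw_rho A B")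
  case PInf
  define one :: "real ^ 'n" where "one = (\<chi> j. 1)"
  have one: "pos_vec one"
    unfolding one_def by (rule pos_vec_one)
  then have r: "cw_rho A B = cw_r A B one"
    using cw_rho_le_cw_r[of one A B] PInf by simp
  show ?thesis
  proof (rule that)
    show "nonneg_vec one" "one \<noteq> 0"
      using one by (simp_all add: pos_vec_imp_nonneg_vec pos_vec_nonzero)
  qed (use one r in \<open>auto intro: tendsto_const\<close>)
next
  case (real p)
  define t where "t k = p + inverse (real (Suc k))" for k
  have p: "0 \<le> p"
    using cw_rho_nonneg[OF AB] real by simp
  obtain y where y: "\<And>k. pos_vec (y k)" "\<And>k i. (A *v y k) $ i \<le> t k * (B *v y k) $ i"
    unfolding t_def
    using Inf_cw_r_approx[OF AB pos_vec_imp_nonneg_vec real[unfolded cw_rho_def] p] by blast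
  have t: "t \<longlonglongrightarrow> p"
    unfolding t_def by (rule LIMSEQ_add_inverse_Suc)
  have t_ge: "p \<le> t k" for k
    by (simp add: t_def)
  obtain w where w: "nonneg_vec w" "w \<noteq> 0" "cw_r A B w = ereal p"
    using cw_rho_attained[OF AB real y t] by blast
  have w_le: "(A *v w) $ i \<le> p * (B *v w) $ i" for i
    using cw_r_le_iff[OF AB w(1) p] w(3) by simp
  obtain ys where ys: "\<And>k. pos_vec (ys k)" "ys \<longlonglongrightarrow> w" "\<And>k. cw_r A B (ys k) \<le> ereal (t k)"
    using positive_approximation[where y = y and t = t, OF AB w(1) w_le y t_ge p] by blast
  have "(\<lambda>k. cw_r A B (ys k)) \<longlonglongrightarrow> ereal p"
  proof (rule tendsto_sandwich[of "\<lambda>k. ereal p" _ _ "\<lambda>k. ereal (t k)"])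
    show "\<forall>\<^sub>F k in sequentially. ereal p \<le> cw_r A B (ys k)"
      using cw_rho_le_cw_r[OF ys(1), of A B] real by simp
    show "\<forall>\<^sub>F k in sequentially. cw_r A B (ys k) \<le> ereal (t k)"
      using ys(3) by simp
    show "(\<lambda>k. ereal (t k)) \<longlonglongrightarrow> ereal p"
      using t by simp
  qed simp
  then show ?thesis
    using that[OF w(1,2) _ ys(1,2)] w(3) real by simp
qed (use cw_rho_nonneg[OF AB] in simp)

theorem lemma2p4:
  fixes A B :: "real ^ 'n::finite ^ 'm::finite"
  assumes "nonneg_mat A" and "nonneg_mat B"
  shows "(\<exists>y. nonneg_vec y \<and> y \<noteq> 0 \<and> cw_rho_hat A B = cw_r A B y)
       \<and> (\<exists>y. nonneg_vec y \<and> y \<noteq> 0 \<and> cw_rho A B = cw_r A B y \<and>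
            (\<exists>ys :: nat \<Rightarrow> real ^ 'n. (\<forall>k. pos_vec (ys k)) \<and> ys \<longlonglongrightarrow> y \<and>
                 (\<lambda>k. cw_r A B (ys k)) \<longlonglongrightarrow> cw_rho A B))"
proof (rule conjI)
  show "\<exists>y. nonneg_vec y \<and> y \<noteq> 0 \<and> cw_rho_hat A B = cw_r A B y"
    by (rule cw_rho_hat_attained[OF assms]) blast
  show "\<exists>y. nonneg_vec y \<and> y \<noteq> 0 \<and> cw_rho A B = cw_r A B y \<and>
      (\<exists>ys :: nat \<Rightarrow> real ^ 'n. (\<forall>k. pos_vec (ys k)) \<and> ys \<longlonglongrightarrow> y \<and>
        (\<lambda>k. cw_r A B (ys k)) \<longlonglongrightarrow> cw_rho A B)"
    by (rule cw_rho_optimal_vector[OF assms]) blast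
qed

end
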